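(* Let $G$ be a connected finite simple undirected graph with vertex set $V_G$ (with $|V_G|\ge 2$) and maximum degree $d_G$. Let $W:V_G\to\mathbb{R}$ be a potential, let $\psi$ be the ground state of $H_{G,W}$ (chosen with $\psi(x)>0$ for all $x$), and let $\gamma$ be the gap between the smallest and second-smallest eigenvalues of $H_{G,W}$. If $\psi$ is single-peaked, then $$\gamma\ge\frac{1}{2(|W|+d_G)|V_G|^2},\qquad\text{where } |W|=\max_{x\in V_G}W(x)-\min_{x\in V_G}W(x).$$
   Context: For a finite simple undirected graph $G$ with vertex set $V_G$, let $\mathcal{H}_G$ be the complex Hilbert space with orthonormal basis $\{|x\rangle : x\in V_G\}$. The graph Laplacian is $L_G=\sum_{x} d_x |x\rangle\langle x| - \sum_{x\sim y}|x\rangle\langle y|$, where $d_x$ is the degree of $x$ and the second sum runs over ordered pairs of adjacent vertices. For a potential $W:V_G\to\mathbb{R}$, $H_{G,W}=L_G+\sum_{x} W(x)|x\rangle\langle x|$. By the Perron–Frobenius theorem, for connected $G$ the ground state of $H_{G,W}$ is nondegenerate and can be written $\sum_x\psi(x)|x\rangle$ with $\psi(x)>0$ for all $x$. The function $\psi$ has a local maximum at $x$ if $\psi(x)\ge\psi(y)$ for every neighbor $y$ of $x$. The ground state $\psi$ is called single-peaked if the set of local maxima of $\psi$ forms a connected set of vertices in $G$ (i.e. induces a connected subgraph). *)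

theory Defs
  imports Complex_Main
begin

definition simple_graph :: "'a set \<Rightarrow> ('a \<Rightarrow> 'a \<Rightarrow> bool) \<Rightarrow> bool" where
  "simple_graph V E \<longleftrightarrow> finite V \<and> (\<forall>x y. E x y \<longrightarrow> x \<in> V \<and> y \<in> V)
     \<and> (\<forall>x y. E x y \<longrightarrow> E y x) \<and> (\<forall>x. \<not> E x x)"

definition induces_connected :: "('a \<Rightarrow> 'a \<Rightarrow> bool) \<Rightarrow> 'a set \<Rightarrow> bool" where
  "induces_connected E S \<longleftrightarrow>
     (\<forall>x\<in>S. \<forall>y\<in>S. (\<lambda>u v. u \<in> S \<and> v \<in> S \<and> E u v)\<^sup>*\<^sup>* x y)"

definition graph_connected :: "'a set \<Rightarrow> ('a \<Rightarrow> 'a \<Rightarrow> bool) \<Rightarrow> bool" where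
  "graph_connected V E \<longleftrightarrow> induces_connected E V"

definition degree :: "'a set \<Rightarrow> ('a \<Rightarrow> 'a \<Rightarrow> bool) \<Rightarrow> 'a \<Rightarrow> nat" where
  "degree V E x = card {y \<in> V. E x y}"

definition max_degree :: "'a set \<Rightarrow> ('a \<Rightarrow> 'a \<Rightarrow> bool) \<Rightarrow> nat" where
  "max_degree V E = Max (degree V E ` V)"

text \<open>Matrix entries of H_{G,W} = L_G + W in the basis |x>, x in V.\<close>
definition hamiltonian :: "'a set \<Rightarrow> ('a \<Rightarrow> 'a \<Rightarrow> bool) \<Rightarrow> ('a \<Rightarrow> real) \<Rightarrow> 'a \<Rightarrow> 'a \<Rightarrow> real" where
  "hamiltonian V E W x y =
     (if x = y then real (degree V E x) + W x else 0) - (if E x y then 1 else 0)"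

definition op_spectrum :: "'a set \<Rightarrow> ('a \<Rightarrow> 'a \<Rightarrow> real) \<Rightarrow> real set" where
  "op_spectrum V M = {e. \<exists>f :: 'a \<Rightarrow> complex. (\<exists>x\<in>V. f x \<noteq> 0) \<and>
      (\<forall>x\<in>V. (\<Sum>y\<in>V. complex_of_real (M x y) * f y) = complex_of_real e * f x)}"

definition ground_energy :: "'a set \<Rightarrow> ('a \<Rightarrow> 'a \<Rightarrow> real) \<Rightarrow> real" where
  "ground_energy V M = Min (op_spectrum V M)"

text \<open>Gap between smallest and second-smallest eigenvalue (the ground state being
  nondegenerate, the second-smallest eigenvalue is the least eigenvalue above the smallest).\<close>
definition spectral_gap :: "'a set \<Rightarrow> ('a \<Rightarrow> 'a \<Rightarrow> real) \<Rightarrow> real" where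
  "spectral_gap V M = Min (op_spectrum V M - {ground_energy V M}) - ground_energy V M"

definition is_local_max :: "'a set \<Rightarrow> ('a \<Rightarrow> 'a \<Rightarrow> bool) \<Rightarrow> ('a \<Rightarrow> real) \<Rightarrow> 'a \<Rightarrow> bool" where
  "is_local_max V E \<psi> x \<longleftrightarrow> x \<in> V \<and> (\<forall>y\<in>V. E x y \<longrightarrow> \<psi> y \<le> \<psi> x)"

definition single_peaked :: "'a set \<Rightarrow> ('a \<Rightarrow> 'a \<Rightarrow> bool) \<Rightarrow> ('a \<Rightarrow> real) \<Rightarrow> bool" where
  "single_peaked V E \<psi> \<longleftrightarrow> induces_connected E {x. is_local_max V E \<psi> x}"

definition potential_range :: "'a set \<Rightarrow> ('a \<Rightarrow> real) \<Rightarrow> real" where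
  "potential_range V W = Max (W ` V) - Min (W ` V)"

end

theory Submission
  imports Defs "Jordan_Normal_Form.Spectral_Radius" "Jordan_Normal_Form.Schur_Decomposition"
    "HOL-Library.Transitive_Closure_Table" "HOL-Analysis.Convex"
begin

text \<open>Write an eigenfunction f of H orthogonal to the ground state \<psi> as \<open>f = \<psi> g\<close>.
  The ground state transform gives \<open>(z - \<mu>) \<parallel>f\<parallel>\<^sup>2 = D/2\<close> with the Dirichlet form
  D, the sum of \<open>\<psi>(x) \<psi>(y) \<bar>g(x) - g(y)\<bar>\<^sup>2\<close> over the edges \<open>x ~ y\<close>,
  so z is real and at least \<mu>.
  Single-peakedness provides, from every vertex x, an ascent path to a global maximum p of \<psi>
  along which \<open>\<psi> \<ge> \<psi>(x)\<close>; Cauchy--Schwarz along it bounds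
  \<open>\<psi>(x)\<^sup>2 \<bar>g(x) - g(p)\<bar>\<^sup>2\<close> by \<open>|V| D\<close>, and as \<open>f \<bottom> \<psi>\<close> we get
  \<open>\<parallel>f\<parallel>\<^sup>2 \<le> \<parallel>f - g(p) \<psi>\<parallel>\<^sup>2 \<le> |V|\<^sup>2 D\<close>. Hence every eigenvalue other than \<mu>
  exceeds it by at least \<open>1/(2|V|\<^sup>2)\<close>, which beats the claimed bound since
  \<open>|W| + d\<^sub>G \<ge> 1\<close>.\<close>

section \<open>Eigenfunctions of kernels on finite sets\<close>

definition is_eigenfunction :: "'a set \<Rightarrow> ('a \<Rightarrow> 'a \<Rightarrow> complex) \<Rightarrow> complex \<Rightarrow> ('a \<Rightarrow> complex) \<Rightarrow> bool"
  where "is_eigenfunction V M z f \<longleftrightarrow>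
    (\<exists>x\<in>V. f x \<noteq> 0) \<and> (\<forall>x\<in>V. (\<Sum>y\<in>V. M x y * f y) = z * f x)"

definition kernel_mat :: "nat \<Rightarrow> (nat \<Rightarrow> 'a) \<Rightarrow> ('a \<Rightarrow> 'a \<Rightarrow> 'b) \<Rightarrow> 'b mat"
  where "kernel_mat n idx M = mat n n (\<lambda>(i, j). M (idx i) (idx j))"

lemma kernel_mat_carrier [simp]: "kernel_mat n idx M \<in> carrier_mat n n"
  and dim_row_kernel_mat [simp]: "dim_row (kernel_mat n idx M) = n"
  by (simp_all add: kernel_mat_def)

definition mat_trace :: "'b::comm_ring_1 mat \<Rightarrow> 'b"
  where "mat_trace A = (\<Sum>i<dim_row A. A $$ (i, i))"

lemma mat_trace_mult_comm:
  assumes "A \<in> carrier_mat n m" "B \<in> carrier_mat m n"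
  shows "mat_trace (A * B) = mat_trace (B * A)"
proof -
  have "mat_trace (A * B) = (\<Sum>i<n. \<Sum>k<m. A $$ (i, k) * B $$ (k, i))"
    using assms unfolding mat_trace_def
    by (intro sum.cong refl) (auto simp: scalar_prod_def atLeast0LessThan)
  also have "\<dots> = (\<Sum>k<m. \<Sum>i<n. B $$ (k, i) * A $$ (i, k))"
    by (subst sum.swap) (simp add: mult.commute)
  also have "\<dots> = mat_trace (B * A)"
    using assms unfolding mat_trace_def
    by (intro sum.cong refl) (auto simp: scalar_prod_def atLeast0LessThan)
  finally show ?thesis .
qed

text \<open>No diagonalizability is needed: the trace is read off a Schur form, whose diagonal
  consists of roots of the characteristic polynomial.\<close>
lemma mat_trace_single_eigenvalue:
  fixes A :: "complex mat"
  assumes A: "A \<in> carrier_mat n n" and ev: "\<And>z. eigenvalue A z \<Longrightarrow> z = c"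
  shows "mat_trace A = of_nat n * c"
proof -
  obtain es where cp: "char_poly A = (\<Prod>a\<leftarrow>es. [:- a, 1:])" and len: "length es = n"
    using char_poly_factorized[OF A] by blast
  obtain U P Q where sd: "schur_decomposition A es = (U, P, Q)"
    by (cases "schur_decomposition A es") auto
  from schur_decomposition[OF A cp sd] have sim: "similar_mat_wit A U P Q"
    and diag: "diag_mat U = es" by auto
  from sim A have U: "U \<in> carrier_mat n n" and P: "P \<in> carrier_mat n n"
    and Q: "Q \<in> carrier_mat n n" and QP: "Q * P = 1\<^sub>m n" and AU: "A = P * U * Q"
    unfolding similar_mat_wit_def Let_def by auto
  have es: "es = replicate n c"
  proof (rule replicate_length_same[symmetric, of es c, unfolded len], intro ballI)
    fix e assume "e \<in> set es"
    then have "poly (char_poly A) e = 0"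
      unfolding cp poly_prod_list by (auto simp: prod_list_zero_iff)
    then show "e = c" using eigenvalue_root_char_poly[OF A] ev by simp
  qed
  have "mat_trace A = mat_trace (P * (U * Q))" using AU P U Q by (simp add: assoc_mult_mat)
  also have "\<dots> = mat_trace ((U * Q) * P)" by (rule mat_trace_mult_comm[OF P]) (use U Q in auto)
  also have "(U * Q) * P = U" using U Q P QP by (simp add: assoc_mult_mat)
  also have "mat_trace U = sum_list es"
    unfolding diag[symmetric] diag_mat_def mat_trace_def
    by (simp add: sum_list_sum_nth atLeast0LessThan)
  finally show ?thesis by (simp add: es sum_list_replicate)
qed

lemma kernel_mat_mult_vec:
  assumes bij: "bij_betw idx {..<n} V" and i: "i < n"
  shows "(kernel_mat n idx M *\<^sub>v vec n (\<lambda>j. f (idx j))) $ i = (\<Sum>y\<in>V. M (idx i) y * f y)"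
proof -
  have "(kernel_mat n idx M *\<^sub>v vec n (\<lambda>j. f (idx j))) $ i = (\<Sum>j<n. M (idx i) (idx j) * f (idx j))"
    using i by (simp add: kernel_mat_def scalar_prod_def atLeast0LessThan row_def)
  also have "\<dots> = (\<Sum>y\<in>V. M (idx i) y * f y)"
    using sum.reindex_bij_betw[OF bij, of "\<lambda>y. M (idx i) y * f y"] by simp
  finally show ?thesis .
qed

lemma eigenvalue_kernel_mat_iff:
  assumes bij: "bij_betw idx {..<n} V"
  shows "eigenvalue (kernel_mat n idx M) z \<longleftrightarrow> (\<exists>f. is_eigenfunction V M z f)"
proof
  assume "eigenvalue (kernel_mat n idx M) z"
  then obtain v where v: "v \<in> carrier_vec n" "v \<noteq> 0\<^sub>v n" "kernel_mat n idx M *\<^sub>v v = z \<cdot>\<^sub>v v"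
    unfolding eigenvalue_def eigenvector_def by auto
  define f where "f x = v $ the_inv_into {..<n} idx x" for x
  have inj: "inj_on idx {..<n}" using bij by (simp add: bij_betw_def)
  have f_idx: "f (idx j) = v $ j" if "j < n" for j
    unfolding f_def using the_inv_into_f_f[OF inj] that by simp
  have v_eq: "v = vec n (\<lambda>j. f (idx j))"
    using v(1) by (intro eq_vecI) (auto simp: f_idx)
  from v obtain j where "j < n" "v $ j \<noteq> 0" by (auto simp: vec_eq_iff)
  then have "idx j \<in> V" "f (idx j) \<noteq> 0" using bij f_idx by (auto simp: bij_betw_def)
  moreover have "(\<Sum>y\<in>V. M x y * f y) = z * f x" if "x \<in> V" for x
  proof -
    obtain i where i: "i < n" "x = idx i" using bij \<open>x \<in> V\<close> by (auto simp: bij_betw_def)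
    then have "(\<Sum>y\<in>V. M x y * f y) = (kernel_mat n idx M *\<^sub>v v) $ i"
      using kernel_mat_mult_vec[OF bij i(1), of M f, symmetric] v_eq i(2) by simp
    then show ?thesis using v(1,3) i f_idx by simp
  qed
  ultimately show "\<exists>f. is_eigenfunction V M z f" unfolding is_eigenfunction_def by blast
next
  assume "\<exists>f. is_eigenfunction V M z f"
  then obtain f x where x: "x \<in> V" "f x \<noteq> 0" and eq: "\<forall>x\<in>V. (\<Sum>y\<in>V. M x y * f y) = z * f x"
    unfolding is_eigenfunction_def by blast
  define v where "v = vec n (\<lambda>j. f (idx j))"
  from x bij obtain i where "i < n" "idx i = x" by (auto simp: bij_betw_def)
  with x have "v \<noteq> 0\<^sub>v n" unfolding v_def by (auto simp: vec_eq_iff)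
  moreover have "kernel_mat n idx M *\<^sub>v v = z \<cdot>\<^sub>v v"
  proof (rule eq_vecI)
    fix i assume "i < dim_vec (z \<cdot>\<^sub>v v)"
    then have i: "i < n" by (simp add: v_def)
    then have "idx i \<in> V" using bij by (auto simp: bij_betw_def)
    then show "(kernel_mat n idx M *\<^sub>v v) $ i = (z \<cdot>\<^sub>v v) $ i"
      unfolding v_def using kernel_mat_mult_vec[OF bij i, of M f] eq i by simp
  qed (simp add: v_def)
  ultimately show "eigenvalue (kernel_mat n idx M) z"
    unfolding eigenvalue_def eigenvector_def v_def by (intro exI[of _ v]) (simp add: v_def)
qed

lemma finite_kernel_eigenvalues:
  assumes "finite V"
  shows "finite {z. \<exists>f. is_eigenfunction V M z f}"
proof -
  obtain idx where bij: "bij_betw idx {..<card V} V"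
    using ex_bij_betw_nat_finite[OF assms] unfolding lessThan_atLeast0 by blast
  have "{z. \<exists>f. is_eigenfunction V M z f} = spectrum (kernel_mat (card V) idx M)"
    unfolding spectrum_def eigenvalue_kernel_mat_iff[OF bij] ..
  then show ?thesis using card_finite_spectrum(1)[OF kernel_mat_carrier] by simp
qed

lemma kernel_trace_single_eigenvalue:
  assumes "finite V" and ev: "\<And>z f. is_eigenfunction V M z f \<Longrightarrow> z = c"
  shows "(\<Sum>x\<in>V. M x x) = of_nat (card V) * c"
proof -
  obtain idx where bij: "bij_betw idx {..<card V} V"
    using ex_bij_betw_nat_finite[OF assms(1)] unfolding lessThan_atLeast0 by blast
  have "mat_trace (kernel_mat (card V) idx M) = of_nat (card V) * c"
    by (rule mat_trace_single_eigenvalue) (auto simp: eigenvalue_kernel_mat_iff[OF bij] ev)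
  then show ?thesis
    using sum.reindex_bij_betw[OF bij, of "\<lambda>x. M x x"] by (simp add: mat_trace_def kernel_mat_def)
qed

lemma op_spectrum_iff:
  "e \<in> op_spectrum V M \<longleftrightarrow> (\<exists>f. is_eigenfunction V (\<lambda>x y. of_real (M x y)) (of_real e) f)"
  unfolding op_spectrum_def is_eigenfunction_def by simp

lemma finite_op_spectrum:
  assumes "finite V"
  shows "finite (op_spectrum V M)"
proof -
  have "op_spectrum V M \<subseteq> Re ` {z. \<exists>f. is_eigenfunction V (\<lambda>x y. of_real (M x y)) z f}"
    by (auto simp: op_spectrum_iff intro!: image_eqI[where x = "complex_of_real _"])
  then show ?thesis using finite_kernel_eigenvalues[OF assms] finite_surj by blast
qed

section \<open>Ascent paths of single-peaked functions\<close>

lemma simple_graph_edgeD: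
  assumes "simple_graph V E" "E x y"
  shows "x \<in> V" "y \<in> V" "E y x"
  using assms by (auto simp: simple_graph_def)

definition superlevel_edge :: "('a \<Rightarrow> 'a \<Rightarrow> bool) \<Rightarrow> ('a \<Rightarrow> real) \<Rightarrow> real \<Rightarrow> 'a \<Rightarrow> 'a \<Rightarrow> bool"
  where "superlevel_edge E \<psi> m u v \<longleftrightarrow> E u v \<and> m \<le> \<psi> u \<and> m \<le> \<psi> v"

lemma superlevel_edge_antimono:
  "m \<le> m' \<Longrightarrow> (superlevel_edge E \<psi> m')\<^sup>*\<^sup>* x y \<Longrightarrow> (superlevel_edge E \<psi> m)\<^sup>*\<^sup>* x y"
  by (erule rtranclp_mono[THEN predicate2D, rotated]) (auto simp: superlevel_edge_def)

lemma local_max_chain_level: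
  assumes G: "simple_graph V E"
    and chain: "(\<lambda>u v. u \<in> {x. is_local_max V E \<psi> x} \<and> v \<in> {x. is_local_max V E \<psi> x} \<and> E u v)\<^sup>*\<^sup>* a b"
  shows "\<psi> b = \<psi> a \<and> (superlevel_edge E \<psi> (\<psi> a))\<^sup>*\<^sup>* a b"
  using chain
proof (induction rule: rtranclp_induct)
  case (step b c)
  then have max: "is_local_max V E \<psi> b" "is_local_max V E \<psi> c" and bc: "E b c" by auto
  have "\<psi> c \<le> \<psi> b"
    using max(1) bc simple_graph_edgeD[OF G bc] unfolding is_local_max_def by blast
  moreover have "\<psi> b \<le> \<psi> c"
    using max(2) simple_graph_edgeD[OF G bc] unfolding is_local_max_def by blast
  ultimately have "\<psi> c = \<psi> a" using step.IH by simp
  moreover have "superlevel_edge E \<psi> (\<psi> a) b c"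
    using bc step.IH \<open>\<psi> c = \<psi> a\<close> by (simp add: superlevel_edge_def)
  ultimately show ?case using step.IH by (blast intro: rtranclp.rtrancl_into_rtrancl)
qed simp

text \<open>Climb strictly ascending edges until a local maximum is reached; the local maxima form a
  connected set on which \<psi> is constant, hence equal to its global maximum.\<close>
lemma single_peaked_ascent:
  assumes G: "simple_graph V E" and peak: "single_peaked V E \<psi>"
    and p: "p \<in> V" "\<forall>y\<in>V. \<psi> y \<le> \<psi> p"
  shows "x \<in> V \<Longrightarrow> m \<le> \<psi> x \<Longrightarrow> (superlevel_edge E \<psi> m)\<^sup>*\<^sup>* x p"
proof (induction "card {z\<in>V. \<psi> x < \<psi> z}" arbitrary: x rule: less_induct)
  case less
  have finV: "finite V" using G by (simp add: simple_graph_def)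
  show ?case
  proof (cases "is_local_max V E \<psi> x")
    case True
    have "is_local_max V E \<psi> p" using p unfolding is_local_max_def by auto
    with True peak have "(\<lambda>u v. u \<in> {x. is_local_max V E \<psi> x} \<and> v \<in> {x. is_local_max V E \<psi> x} \<and> E u v)\<^sup>*\<^sup>* x p"
      unfolding single_peaked_def induces_connected_def by blast
    then have "(superlevel_edge E \<psi> (\<psi> x))\<^sup>*\<^sup>* x p"
      using local_max_chain_level[OF G] by blast
    then show ?thesis by (rule superlevel_edge_antimono[OF less.prems(2)])
  next
    case False
    then obtain y where y: "y \<in> V" "E x y" "\<psi> x < \<psi> y"
      using less.prems unfolding is_local_max_def by force
    have "{z\<in>V. \<psi> y < \<psi> z} \<subset> {z\<in>V. \<psi> x < \<psi> z}" using y by auto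
    then have "card {z\<in>V. \<psi> y < \<psi> z} < card {z\<in>V. \<psi> x < \<psi> z}"
      using finV by (intro psubset_card_mono) auto
    from less.hyps[OF this y(1)] less.prems y have "(superlevel_edge E \<psi> m)\<^sup>*\<^sup>* y p" by auto
    moreover have "superlevel_edge E \<psi> m x y" using y less.prems by (simp add: superlevel_edge_def)
    ultimately show ?thesis by (meson converse_rtranclp_into_rtranclp)
  qed
qed

section \<open>The Dirichlet form and a Poincar\'e inequality\<close>

lemma sum_cmod_sq_le_shifted:
  fixes f :: "'a \<Rightarrow> complex" and b :: "'a \<Rightarrow> real"
  assumes orth: "(\<Sum>x\<in>A. of_real (b x) * f x) = 0"
  shows "(\<Sum>x\<in>A. (cmod (f x))\<^sup>2) \<le> (\<Sum>x\<in>A. (cmod (f x - of_real (b x) * c))\<^sup>2)"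
proof -
  have re: "(\<Sum>x\<in>A. b x * Re (f x)) = 0" and im: "(\<Sum>x\<in>A. b x * Im (f x)) = 0"
    using arg_cong[OF orth, of Re] arg_cong[OF orth, of Im] by (simp_all add: Re_sum Im_sum)
  have "(cmod (f x - of_real (b x) * c))\<^sup>2 = (cmod (f x))\<^sup>2 - 2 * Re c * (b x * Re (f x))
      - 2 * Im c * (b x * Im (f x)) + (cmod c)\<^sup>2 * (b x)\<^sup>2" for x
    unfolding cmod_power2 by (simp add: power2_eq_square algebra_simps)
  then have "(\<Sum>x\<in>A. (cmod (f x - of_real (b x) * c))\<^sup>2)
      = (\<Sum>x\<in>A. (cmod (f x))\<^sup>2) - 2 * Re c * (\<Sum>x\<in>A. b x * Re (f x))
        - 2 * Im c * (\<Sum>x\<in>A. b x * Im (f x)) + (cmod c)\<^sup>2 * (\<Sum>x\<in>A. (b x)\<^sup>2)"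
    by (simp add: sum.distrib sum_subtractf sum_distrib_left)
  then show ?thesis using re im by (simp add: sum_nonneg)
qed

lemma hamiltonian_apply:
  fixes f :: "'a \<Rightarrow> 'b::real_algebra_1"
  assumes G: "simple_graph V E" and x: "x \<in> V"
  shows "(\<Sum>y\<in>V. of_real (hamiltonian V E W x y) * f y)
     = of_real (real (Defs.degree V E x) + W x) * f x - (\<Sum>y\<in>V. if E x y then f y else 0)"
proof -
  have "\<not> E x x" and finV: "finite V" using G by (auto simp: simple_graph_def)
  then have "(\<Sum>y\<in>V. of_real (hamiltonian V E W x y) * f y)
      = (\<Sum>y\<in>V. (if x = y then of_real (real (Defs.degree V E x) + W x) * f y else 0)
             - (if E x y then f y else 0))"
    by (intro sum.cong refl) (auto simp: hamiltonian_def algebra_simps)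
  also have "\<dots> = of_real (real (Defs.degree V E x) + W x) * f x - (\<Sum>y\<in>V. if E x y then f y else 0)"
    using x finV by (simp add: sum_subtractf)
  finally show ?thesis .
qed

locale positive_graph_function =
  fixes V :: "'a set" and E :: "'a \<Rightarrow> 'a \<Rightarrow> bool" and \<psi> :: "'a \<Rightarrow> real"
  assumes simple: "simple_graph V E" and positive: "\<forall>x\<in>V. 0 < \<psi> x"
begin

lemma finite_V: "finite V"
  using simple by (simp add: simple_graph_def)

definition edge_energy :: "('a \<Rightarrow> complex) \<Rightarrow> 'a \<Rightarrow> real" where
  "edge_energy g u = (\<Sum>v\<in>V. if E u v then \<psi> u * \<psi> v * (cmod (g u - g v))\<^sup>2 else 0)"

definition dirichlet_form :: "('a \<Rightarrow> complex) \<Rightarrow> real" where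
  "dirichlet_form g = (\<Sum>u\<in>V. edge_energy g u)"

lemma edge_weight_nonneg: "E u v \<Longrightarrow> 0 \<le> \<psi> u * \<psi> v * t\<^sup>2"
  using positive simple_graph_edgeD[OF simple, of u v] by (simp add: less_imp_le)

lemma edge_energy_nonneg: "0 \<le> edge_energy g u"
  unfolding edge_energy_def by (intro sum_nonneg) (simp add: edge_weight_nonneg)

lemma edge_term_le_edge_energy:
  assumes "E u v"
  shows "\<psi> u * \<psi> v * (cmod (g u - g v))\<^sup>2 \<le> edge_energy g u"
proof -
  have uv: "u \<in> V" "v \<in> V" using simple_graph_edgeD[OF simple assms] by auto
  have "(if E u v then \<psi> u * \<psi> v * (cmod (g u - g v))\<^sup>2 else 0) \<le> edge_energy g u"
    unfolding edge_energy_def using finite_V uv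
    by (intro member_le_sum) (auto simp: edge_weight_nonneg)
  then show ?thesis using assms by simp
qed

lemma superlevel_path_bound:
  assumes "rtrancl_path (superlevel_edge E \<psi> m) a xs b" "distinct (a # xs)" "0 \<le> m" "a \<in> V"
  shows "m * cmod (g a - g b) \<le> (\<Sum>u\<in>set (a # xs). sqrt (edge_energy g u))"
  using assms
proof (induction rule: rtrancl_path.induct)
  case (base x)
  then show ?case by (simp add: edge_energy_nonneg)
next
  case (step a c ys b)
  have edge: "E a c" "m \<le> \<psi> a" "m \<le> \<psi> c" using step(1) by (auto simp: superlevel_edge_def)
  have "c \<in> V" using simple_graph_edgeD[OF simple edge(1)] by simp
  have "m * m \<le> \<psi> a * \<psi> c" using edge step by (intro mult_mono) auto
  then have "(m * cmod (g a - g c))\<^sup>2 \<le> \<psi> a * \<psi> c * (cmod (g a - g c))\<^sup>2"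
    by (simp add: power_mult_distrib mult_right_mono power2_eq_square[of m])
  also have "\<dots> \<le> edge_energy g a" using edge_term_le_edge_energy edge by blast
  finally have first: "m * cmod (g a - g c) \<le> sqrt (edge_energy g a)" by (rule real_le_rsqrt)
  have rest: "m * cmod (g c - g b) \<le> (\<Sum>u\<in>set (c # ys). sqrt (edge_energy g u))"
    using step \<open>c \<in> V\<close> by auto
  have "cmod (g a - g b) \<le> cmod (g a - g c) + cmod (g c - g b)"
    using norm_triangle_ineq[of "g a - g c" "g c - g b"] by simp
  then have "m * cmod (g a - g b) \<le> m * cmod (g a - g c) + m * cmod (g c - g b)"
    using step.prems(2) by (simp add: mult_left_mono flip: distrib_left)
  also have "\<dots> \<le> sqrt (edge_energy g a) + (\<Sum>u\<in>set (c # ys). sqrt (edge_energy g u))"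
    using first rest by simp
  also have "\<dots> = (\<Sum>u\<in>set (a # c # ys). sqrt (edge_energy g u))"
    using step(4) by (simp add: insert_absorb)
  finally show ?case .
qed

lemma superlevel_path_subset:
  "rtrancl_path (superlevel_edge E \<psi> m) a xs b \<Longrightarrow> set xs \<subseteq> V"
  by (induction rule: rtrancl_path.induct)
    (auto simp: superlevel_edge_def dest: simple_graph_edgeD[OF simple])

text \<open>Along an ascent path from x every weight is at least \<psi> x, so Cauchy--Schwarz over the
  at most card V vertices of the path controls the oscillation of g between x and the peak.\<close>
lemma peak_oscillation_bound:
  assumes peak: "single_peaked V E \<psi>" and p: "p \<in> V" "\<forall>y\<in>V. \<psi> y \<le> \<psi> p" and x: "x \<in> V"
  shows "(\<psi> x)\<^sup>2 * (cmod (g x - g p))\<^sup>2 \<le> real (card V) * dirichlet_form g"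
proof -
  obtain xs where "rtrancl_path (superlevel_edge E \<psi> (\<psi> x)) x xs p"
    using single_peaked_ascent[OF simple peak p x order_refl]
    by (auto simp: rtranclp_eq_rtrancl_path)
  then obtain ys where path: "rtrancl_path (superlevel_edge E \<psi> (\<psi> x)) x ys p" "distinct (x # ys)"
    by (rule rtrancl_path_distinct)
  define U where "U = set (x # ys)"
  have UV: "U \<subseteq> V" using superlevel_path_subset[OF path(1)] x unfolding U_def by auto
  have "\<psi> x * cmod (g x - g p) \<le> (\<Sum>u\<in>U. sqrt (edge_energy g u))"
    unfolding U_def using superlevel_path_bound[OF path] x positive by auto
  moreover have "0 \<le> \<psi> x * cmod (g x - g p)" using positive x by auto
  ultimately have "(\<psi> x * cmod (g x - g p))\<^sup>2 \<le> (\<Sum>u\<in>U. sqrt (edge_energy g u))\<^sup>2"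
    by (rule power_mono)
  also have "\<dots> \<le> real (card U) * (\<Sum>u\<in>U. (sqrt (edge_energy g u))\<^sup>2)"
    using sum_squared_le_sum_of_squares by (simp add: mult.commute)
  also have "(\<Sum>u\<in>U. (sqrt (edge_energy g u))\<^sup>2) = (\<Sum>u\<in>U. edge_energy g u)"
    using edge_energy_nonneg by (intro sum.cong refl) auto
  also have "real (card U) * (\<Sum>u\<in>U. edge_energy g u) \<le> real (card V) * dirichlet_form g"
  proof (rule mult_mono)
    show "(\<Sum>u\<in>U. edge_energy g u) \<le> dirichlet_form g"
      unfolding dirichlet_form_def using UV finite_V edge_energy_nonneg by (intro sum_mono2) auto
  qed (use card_mono[OF finite_V UV] edge_energy_nonneg in \<open>auto intro: sum_nonneg\<close>)
  finally show ?thesis by (simp add: power_mult_distrib)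
qed

text \<open>Subtracting the multiple of \<psi> that agrees with f at a global maximum p of \<psi> can only
  increase the norm of \<open>f \<bottom> \<psi>\<close>; then apply the oscillation bound at every vertex.\<close>
lemma poincare_inequality:
  fixes f :: "'a \<Rightarrow> complex"
  assumes peak: "single_peaked V E \<psi>" and orth: "(\<Sum>x\<in>V. of_real (\<psi> x) * f x) = 0"
  shows "(\<Sum>x\<in>V. (cmod (f x))\<^sup>2) \<le> real (card V) ^ 2 * dirichlet_form (\<lambda>x. f x / of_real (\<psi> x))"
proof (cases "V = {}")
  case False
  define g where "g = (\<lambda>x. f x / of_real (\<psi> x))"
  have "Max (\<psi> ` V) \<in> \<psi> ` V" using finite_V False by (intro Max_in) auto
  then obtain p where p: "p \<in> V" "\<psi> p = Max (\<psi> ` V)" by auto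
  then have p_max: "\<forall>y\<in>V. \<psi> y \<le> \<psi> p" using finite_V by auto
  have "(\<Sum>x\<in>V. (cmod (f x))\<^sup>2) \<le> (\<Sum>x\<in>V. (cmod (f x - of_real (\<psi> x) * g p))\<^sup>2)"
    by (rule sum_cmod_sq_le_shifted[OF orth])
  also have "\<dots> = (\<Sum>x\<in>V. (\<psi> x)\<^sup>2 * (cmod (g x - g p))\<^sup>2)"
  proof (intro sum.cong refl)
    fix x assume "x \<in> V"
    then have "f x - of_real (\<psi> x) * g p = of_real (\<psi> x) * (g x - g p)"
      using positive by (simp add: g_def algebra_simps less_imp_neq[symmetric])
    then show "(cmod (f x - of_real (\<psi> x) * g p))\<^sup>2 = (\<psi> x)\<^sup>2 * (cmod (g x - g p))\<^sup>2"
      by (simp add: norm_mult power_mult_distrib)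
  qed
  also have "\<dots> \<le> (\<Sum>x\<in>V. real (card V) * dirichlet_form g)"
    by (intro sum_mono peak_oscillation_bound[OF peak p(1) p_max])
  finally show ?thesis by (simp add: g_def power2_eq_square mult.assoc)
qed simp

end

section \<open>The spectral gap\<close>

locale ground_state = positive_graph_function +
  fixes W :: "'a \<Rightarrow> real" and \<mu> :: real
  assumes ground_eq: "\<forall>x\<in>V. (\<Sum>y\<in>V. hamiltonian V E W x y * \<psi> y) = \<mu> * \<psi> x"
begin

lemma ground_state_transform:
  fixes f g :: "'a \<Rightarrow> complex"
  assumes ev: "\<forall>x\<in>V. (\<Sum>y\<in>V. of_real (hamiltonian V E W x y) * f y) = z * f x"
    and fg: "\<forall>x\<in>V. f x = of_real (\<psi> x) * g x" and x: "x \<in> V"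
  shows "(z - of_real \<mu>) * f x = (\<Sum>y\<in>V. if E x y then of_real (\<psi> y) * (g x - g y) else 0)"
proof -
  let ?d = "real (Defs.degree V E x) + W x"
  have nbr: "(\<Sum>y\<in>V. if E x y then of_real (\<psi> y) else 0) = (of_real ((?d - \<mu>) * \<psi> x) :: complex)"
  proof -
    have real_nbr: "(\<Sum>y\<in>V. if E x y then \<psi> y else 0) = (?d - \<mu>) * \<psi> x"
      using ground_eq x hamiltonian_apply[OF simple x, of W \<psi>] by (simp add: algebra_simps)
    have "(\<Sum>y\<in>V. if E x y then of_real (\<psi> y) else 0)
        = (of_real (\<Sum>y\<in>V. if E x y then \<psi> y else 0) :: complex)"
      unfolding of_real_sum by (intro sum.cong refl) auto
    then show ?thesis by (simp only: real_nbr)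
  qed
  have "(\<Sum>y\<in>V. if E x y then of_real (\<psi> y) * (g x - g y) else 0)
      = (\<Sum>y\<in>V. if E x y then of_real (\<psi> y) else 0) * g x
        - (\<Sum>y\<in>V. if E x y then of_real (\<psi> y) * g y else 0)"
    unfolding sum_distrib_right sum_subtractf[symmetric] by (intro sum.cong refl) (auto simp: algebra_simps)
  also have "\<dots> = of_real (?d - \<mu>) * f x - (\<Sum>y\<in>V. if E x y then f y else 0)"
    using fg x simple_graph_edgeD[OF simple] by (simp add: nbr cong: if_cong)
  also have "\<dots> = (z - of_real \<mu>) * f x"
    using ev x hamiltonian_apply[OF simple x, of W f] by (simp add: algebra_simps)
  finally show ?thesis ..
qed

text \<open>Summing the ground state transform against \<open>cnj (f x)\<close> and symmetrizing over
  the edges.\<close>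
lemma dirichlet_identity:
  fixes f g :: "'a \<Rightarrow> complex"
  assumes ev: "\<forall>x\<in>V. (\<Sum>y\<in>V. of_real (hamiltonian V E W x y) * f y) = z * f x"
    and fg: "\<forall>x\<in>V. f x = of_real (\<psi> x) * g x"
  shows "(z - of_real \<mu>) * of_real (\<Sum>x\<in>V. (cmod (f x))\<^sup>2) = of_real (dirichlet_form g / 2)"
proof -
  define T where "T x y = (if E x y then of_real (\<psi> x * \<psi> y) * (cnj (g x) * (g x - g y)) else 0)"
    for x y
  have "(z - of_real \<mu>) * of_real (\<Sum>x\<in>V. (cmod (f x))\<^sup>2)
      = (\<Sum>x\<in>V. cnj (f x) * ((z - of_real \<mu>) * f x))"
    unfolding of_real_sum sum_distrib_left complex_norm_square by (simp add: algebra_simps)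
  also have "\<dots> = (\<Sum>x\<in>V. \<Sum>y\<in>V. T x y)"
  proof (intro sum.cong refl)
    fix x assume x: "x \<in> V"
    show "cnj (f x) * ((z - of_real \<mu>) * f x) = (\<Sum>y\<in>V. T x y)"
      unfolding ground_state_transform[OF ev fg x] sum_distrib_left T_def using fg x
      by (intro sum.cong refl) (simp add: algebra_simps)
  qed
  finally have lhs: "(z - of_real \<mu>) * of_real (\<Sum>x\<in>V. (cmod (f x))\<^sup>2) = (\<Sum>x\<in>V. \<Sum>y\<in>V. T x y)" .
  have pair: "T x y + T y x = of_real (if E x y then \<psi> x * \<psi> y * (cmod (g x - g y))\<^sup>2 else 0)"
    for x y
  proof -
    have "E y x = E x y" using simple_graph_edgeD(3)[OF simple] by blast
    moreover have norm_sq: "(complex_of_real (cmod (g x - g y)))\<^sup>2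
        = g x * cnj (g x) + g y * cnj (g y) - g x * cnj (g y) - g y * cnj (g x)"
      using complex_norm_square[of "g x - g y"] by (simp add: algebra_simps)
    ultimately show ?thesis unfolding T_def by (cases "E x y") (simp_all add: algebra_simps norm_sq)
  qed
  have "2 * (\<Sum>x\<in>V. \<Sum>y\<in>V. T x y) = (\<Sum>x\<in>V. \<Sum>y\<in>V. T x y + T y x)"
    using sum.swap[of T V V] by (simp add: sum.distrib)
  also have "\<dots> = of_real (dirichlet_form g)"
    unfolding pair dirichlet_form_def edge_energy_def of_real_sum ..
  finally show ?thesis using lhs by (simp add: mult.commute)
qed

lemma ground_state_pairing:
  fixes f :: "'a \<Rightarrow> complex"
  shows "(\<Sum>x\<in>V. of_real (\<psi> x) * (\<Sum>y\<in>V. of_real (hamiltonian V E W x y) * f y))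
    = of_real \<mu> * (\<Sum>x\<in>V. of_real (\<psi> x) * f x)"
proof -
  have sym: "hamiltonian V E W x y = hamiltonian V E W y x" for x y
    unfolding hamiltonian_def using simple_graph_edgeD(3)[OF simple] by auto
  have "(\<Sum>x\<in>V. of_real (\<psi> x) * (\<Sum>y\<in>V. of_real (hamiltonian V E W x y) * f y))
      = (\<Sum>x\<in>V. \<Sum>y\<in>V. of_real (\<psi> x * hamiltonian V E W x y) * f y)"
    by (simp add: sum_distrib_left mult_ac)
  also have "\<dots> = (\<Sum>y\<in>V. of_real (\<Sum>x\<in>V. hamiltonian V E W y x * \<psi> x) * f y)"
    by (subst sum.swap) (simp add: of_real_sum sum_distrib_left sum_distrib_right sym mult_ac)
  also have "\<dots> = of_real \<mu> * (\<Sum>x\<in>V. of_real (\<psi> x) * f x)"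
    using ground_eq by (simp add: sum_distrib_left mult_ac)
  finally show ?thesis .
qed

lemma eigenfunction_orthogonal_ground_state:
  fixes f :: "'a \<Rightarrow> complex"
  assumes ev: "\<forall>x\<in>V. (\<Sum>y\<in>V. of_real (hamiltonian V E W x y) * f y) = z * f x"
    and ne: "z \<noteq> of_real \<mu>"
  shows "(\<Sum>x\<in>V. of_real (\<psi> x) * f x) = 0"
proof -
  have "z * (\<Sum>x\<in>V. of_real (\<psi> x) * f x)
      = (\<Sum>x\<in>V. of_real (\<psi> x) * (\<Sum>y\<in>V. of_real (hamiltonian V E W x y) * f y))"
    using ev by (simp add: sum_distrib_left mult_ac)
  then show ?thesis using ne by (simp add: ground_state_pairing)
qed

end

locale single_peaked_ground_state = ground_state +
  assumes single_peaked: "single_peaked V E \<psi>"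
begin

lemma orthogonal_eigenvalue_bound:
  fixes f :: "'a \<Rightarrow> complex"
  assumes eigen: "is_eigenfunction V (\<lambda>x y. of_real (hamiltonian V E W x y)) z f"
    and orth: "(\<Sum>x\<in>V. of_real (\<psi> x) * f x) = 0"
  shows "Im z = 0" and "\<mu> + 1 / (2 * real (card V) ^ 2) \<le> Re z"
proof -
  from eigen have nz: "\<exists>x\<in>V. f x \<noteq> 0"
    and ev: "\<forall>x\<in>V. (\<Sum>y\<in>V. of_real (hamiltonian V E W x y) * f y) = z * f x"
    unfolding is_eigenfunction_def by auto
  define g where "g = (\<lambda>x. f x / of_real (\<psi> x))"
  have fg: "\<forall>x\<in>V. f x = of_real (\<psi> x) * g x"
    using positive by (simp add: g_def less_imp_neq[symmetric])
  define S where "S = (\<Sum>x\<in>V. (cmod (f x))\<^sup>2)"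
  define D where "D = dirichlet_form g"
  have "S > 0"
  proof -
    from nz obtain x where "x \<in> V" "f x \<noteq> 0" by auto
    then have "(cmod (f x))\<^sup>2 \<le> S" "0 < (cmod (f x))\<^sup>2"
      unfolding S_def using finite_V by (auto intro: member_le_sum)
    then show ?thesis by linarith
  qed
  have S_le: "S \<le> real (card V) ^ 2 * D"
    unfolding S_def D_def g_def by (rule poincare_inequality[OF single_peaked orth])
  have "card V > 0" using nz finite_V card_gt_0_iff by blast
  have "0 < real (card V) ^ 2 * D" using S_le \<open>S > 0\<close> by linarith
  with \<open>card V > 0\<close> have "D > 0" by (simp add: zero_less_mult_iff)
  have "(z - of_real \<mu>) * of_real S = of_real (D / 2)"
    unfolding S_def D_def by (rule dirichlet_identity[OF ev fg])
  then have "z = of_real (\<mu> + D / (2 * S))"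
    using \<open>S > 0\<close> by (simp add: field_simps)
  moreover have "1 / (2 * real (card V) ^ 2) \<le> D / (2 * S)"
    using S_le \<open>S > 0\<close> \<open>D > 0\<close> \<open>card V > 0\<close> by (simp add: field_simps)
  ultimately show "Im z = 0" "\<mu> + 1 / (2 * real (card V) ^ 2) \<le> Re z" by simp_all
qed

lemma orthogonal_eigenfunction_excited:
  fixes f :: "'a \<Rightarrow> complex"
  assumes eigen: "is_eigenfunction V (\<lambda>x y. of_real (hamiltonian V E W x y)) z f"
    and orth: "(\<Sum>x\<in>V. of_real (\<psi> x) * f x) = 0"
  shows "Re z \<in> op_spectrum V (hamiltonian V E W) - {\<mu>}"
proof -
  have "is_eigenfunction V (\<lambda>x y. of_real (hamiltonian V E W x y)) (of_real (Re z)) f"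
    using eigen orthogonal_eigenvalue_bound(1)[OF eigen orth] by (simp add: complex_is_Real_iff)
  moreover have "V \<noteq> {}" using eigen unfolding is_eigenfunction_def by blast
  then have "0 < 1 / (2 * real (card V) ^ 2)" using finite_V by (simp add: card_gt_0_iff)
  then have "Re z \<noteq> \<mu>" using orthogonal_eigenvalue_bound(2)[OF eigen orth] by linarith
  ultimately show ?thesis by (auto simp: op_spectrum_iff)
qed

lemma perturbed_eigenvalue_if_no_excited:
  fixes f :: "'a \<Rightarrow> complex"
  assumes only_ground: "op_spectrum V (hamiltonian V E W) - {\<mu>} = {}"
    and eigen: "is_eigenfunction V (\<lambda>x y. of_real (hamiltonian V E W x y + \<psi> x * \<psi> y)) z f"
  shows "z = of_real (\<mu> + (\<Sum>x\<in>V. (\<psi> x)\<^sup>2))"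
proof -
  define t where "t = (\<Sum>x\<in>V. of_real (\<psi> x) * f x)"
  have Hf: "\<forall>x\<in>V. (\<Sum>y\<in>V. of_real (hamiltonian V E W x y) * f y) = z * f x - of_real (\<psi> x) * t"
  proof
    fix x assume "x \<in> V"
    have "(\<Sum>y\<in>V. of_real (hamiltonian V E W x y + \<psi> x * \<psi> y) * f y)
        = (\<Sum>y\<in>V. of_real (hamiltonian V E W x y) * f y) + of_real (\<psi> x) * t"
      unfolding t_def by (simp add: distrib_right sum.distrib sum_distrib_left mult.assoc)
    then show "(\<Sum>y\<in>V. of_real (hamiltonian V E W x y) * f y) = z * f x - of_real (\<psi> x) * t"
      using eigen \<open>x \<in> V\<close> unfolding is_eigenfunction_def by (simp add: eq_diff_eq)
  qed
  have "t \<noteq> 0"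
  proof
    assume "t = 0"
    with Hf eigen have "is_eigenfunction V (\<lambda>x y. of_real (hamiltonian V E W x y)) z f"
      unfolding is_eigenfunction_def by simp
    with \<open>t = 0\<close> show False
      using orthogonal_eigenfunction_excited only_ground unfolding t_def by blast
  qed
  have "of_real \<mu> * t = (\<Sum>x\<in>V. of_real (\<psi> x) * (\<Sum>y\<in>V. of_real (hamiltonian V E W x y) * f y))"
    unfolding t_def by (rule ground_state_pairing[symmetric])
  also have "\<dots> = (\<Sum>x\<in>V. of_real (\<psi> x) * (z * f x - of_real (\<psi> x) * t))"
    using Hf by simp
  also have "\<dots> = (z - of_real (\<Sum>x\<in>V. (\<psi> x)\<^sup>2)) * t"
    unfolding t_def
    by (simp add: algebra_simps sum_subtractf sum_distrib_left sum_distrib_right of_real_sum power2_eq_square)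
  finally have "(z - of_real (\<mu> + (\<Sum>x\<in>V. (\<psi> x)\<^sup>2))) * t = 0" by (simp add: algebra_simps)
  with \<open>t \<noteq> 0\<close> show ?thesis by simp
qed

text \<open>If \<mu> were the only eigenvalue, H and its rank-one perturbation \<open>H + \<psi> \<psi>\<^sup>T\<close> would have
  the single eigenvalues \<mu> and \<open>\<mu> + s\<close> with \<open>s = \<parallel>\<psi>\<parallel>\<^sup>2\<close>, so comparing traces gives
  \<open>(n - 1) s = 0\<close>.\<close>
lemma excited_eigenvalue_exists:
  assumes n: "card V \<ge> 2"
  shows "op_spectrum V (hamiltonian V E W) - {\<mu>} \<noteq> {}"
proof
  assume only_ground: "op_spectrum V (hamiltonian V E W) - {\<mu>} = {}"
  define s where "s = (\<Sum>x\<in>V. (\<psi> x)\<^sup>2)"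
  have "z = of_real \<mu>" if "is_eigenfunction V (\<lambda>x y. of_real (hamiltonian V E W x y)) z f" for z f
    using that eigenfunction_orthogonal_ground_state[of f z] orthogonal_eigenfunction_excited only_ground
    unfolding is_eigenfunction_def by blast
  then have trace_H: "(\<Sum>x\<in>V. complex_of_real (hamiltonian V E W x x)) = of_nat (card V) * of_real \<mu>"
    by (rule kernel_trace_single_eigenvalue[OF finite_V])
  have "(\<Sum>x\<in>V. complex_of_real (hamiltonian V E W x x + \<psi> x * \<psi> x)) = of_nat (card V) * of_real (\<mu> + s)"
    unfolding s_def using perturbed_eigenvalue_if_no_excited[OF only_ground]
    by (rule kernel_trace_single_eigenvalue[OF finite_V])
  moreover have "(\<Sum>x\<in>V. complex_of_real (hamiltonian V E W x x + \<psi> x * \<psi> x))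
      = (\<Sum>x\<in>V. complex_of_real (hamiltonian V E W x x)) + of_real s"
    unfolding s_def by (simp add: sum.distrib of_real_sum power2_eq_square)
  ultimately have "of_real ((real (card V) - 1) * s) = (0 :: complex)"
    using trace_H by (simp add: algebra_simps)
  moreover have "s > 0"
  proof -
    have "V \<noteq> {}" using n by auto
    then obtain x where "x \<in> V" by blast
    then have "(\<psi> x)\<^sup>2 \<le> s" "(\<psi> x)\<^sup>2 > 0"
      unfolding s_def using finite_V positive by (auto intro!: member_le_sum)
    then show ?thesis by linarith
  qed
  ultimately show False using n by simp
qed

lemma spectral_gap_lower_bound:
  assumes n: "card V \<ge> 2"
  shows "\<mu> + 1 / (2 * real (card V) ^ 2) \<le> Min (op_spectrum V (hamiltonian V E W) - {\<mu>})"
proof -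
  have "\<mu> + 1 / (2 * real (card V) ^ 2) \<le> e"
    if e: "e \<in> op_spectrum V (hamiltonian V E W)" "e \<noteq> \<mu>" for e
  proof -
    obtain f where f: "is_eigenfunction V (\<lambda>x y. of_real (hamiltonian V E W x y)) (of_real e) f"
      using e(1) unfolding op_spectrum_iff by blast
    then have "(\<Sum>x\<in>V. of_real (\<psi> x) * f x) = 0"
      using e(2) eigenfunction_orthogonal_ground_state[of f "of_real e"]
      unfolding is_eigenfunction_def by simp
    from orthogonal_eigenvalue_bound(2)[OF f this] show ?thesis by simp
  qed
  moreover have "finite (op_spectrum V (hamiltonian V E W) - {\<mu>})"
    using finite_op_spectrum finite_V by blast
  ultimately show ?thesis using excited_eigenvalue_exists[OF n] by (simp add: Min_ge_iff)
qed

end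

lemma potential_range_nonneg:
  assumes "finite V" "V \<noteq> {}"
  shows "0 \<le> potential_range V W"
proof -
  obtain x where "x \<in> V" using assms by auto
  then have "Min (W ` V) \<le> W x" "W x \<le> Max (W ` V)" using assms by auto
  then show ?thesis unfolding potential_range_def by simp
qed

lemma max_degree_pos:
  assumes G: "simple_graph V E" and conn: "graph_connected V E" and n: "card V \<ge> 2"
  shows "0 < max_degree V E"
proof -
  have finV: "finite V" using G by (simp add: simple_graph_def)
  have "\<not> card V \<le> Suc 0" using n by simp
  then obtain x y where xy: "x \<in> V" "y \<in> V" "x \<noteq> y"
    using card_le_Suc0_iff_eq[OF finV] by blast
  have "(\<lambda>u v. u \<in> V \<and> v \<in> V \<and> E u v)\<^sup>*\<^sup>* x y"
    using conn xy unfolding graph_connected_def induces_connected_def by auto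
  then obtain w where "E x w" using xy(3) by (auto elim: converse_rtranclpE)
  then have "w \<in> {y \<in> V. E x y}" using simple_graph_edgeD[OF G] by auto
  then have "0 < Defs.degree V E x"
    unfolding Defs.degree_def using finV by (subst card_gt_0_iff) auto
  also have "Defs.degree V E x \<le> max_degree V E"
    unfolding max_degree_def using finV xy by auto
  finally show ?thesis .
qed

theorem proposition4:
  fixes V :: "'a set" and E :: "'a \<Rightarrow> 'a \<Rightarrow> bool"
    and W :: "'a \<Rightarrow> real" and \<psi> :: "'a \<Rightarrow> real"
  assumes "simple_graph V E"
    and "graph_connected V E"
    and "card V \<ge> 2"
    and "\<forall>x\<in>V. \<psi> x > 0"
    and "\<forall>x\<in>V. (\<Sum>y\<in>V. hamiltonian V E W x y * \<psi> y)
                = ground_energy V (hamiltonian V E W) * \<psi> x"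
    and "single_peaked V E \<psi>"
  shows "spectral_gap V (hamiltonian V E W)
           \<ge> 1 / (2 * (potential_range V W + real (max_degree V E)) * real (card V) ^ 2)"
proof -
  interpret single_peaked_ground_state V E \<psi> W "ground_energy V (hamiltonian V E W)"
    using assms by unfold_locales auto
  have "1 \<le> potential_range V W + real (max_degree V E)"
    using potential_range_nonneg[OF finite_V, of W] max_degree_pos[OF assms(1-3)] assms(3) by fastforce
  then have "1 / (2 * (potential_range V W + real (max_degree V E)) * real (card V) ^ 2)
      \<le> 1 / (2 * real (card V) ^ 2)"
    using assms(3) by (intro divide_left_mono mult_right_mono mult_pos_pos) auto
  also have "\<dots> \<le> spectral_gap V (hamiltonian V E W)"
    using spectral_gap_lower_bound[OF assms(3)] unfolding spectral_gap_def by simp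
  finally show ?thesis .
qed

end
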